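(* Let $\mathcal C$ be the epireflective subcategory of $\mathbf{Top}$ defined by any one of the separation axioms $T_0$, $T_1$, $T_2$, functionally Hausdorff, and let $\mathbf{TopMlt}$ be the category of topological Mal'tsev spaces. Then $\mathrm{r}_{\mathcal C}(\mathbf{TopMlt})$ is an epireflective subcategory of $\mathbf{TopMlt}$; in particular, for every topological Mal'tsev space $(X,\Phi)$, the reflection $\mathrm{r}_{\mathcal C}X$ is a topological Mal'tsev space with the operation $\mathrm{r}_{\mathcal C}(\Phi)$ determined by $\mathrm{r}_{\mathcal C}(\Phi)(\mathrm{r}_{(X,\mathcal C)}(x),\mathrm{r}_{(X,\mathcal C)}(y),\mathrm{r}_{(X,\mathcal C)}(z))=\mathrm{r}_{(X,\mathcal C)}(\Phi(x,y,z))$.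
   Context: A Mal'tsev operation on a space $X$ is a map $\Phi\colon X^3\to X$ with $\Phi(x,x,y)=\Phi(y,x,x)=y$ for all $x,y$; a topological Mal'tsev space is a space with a continuous Mal'tsev operation, and morphisms in $\mathbf{TopMlt}$ are continuous maps preserving the operation. For an epireflective subcategory $\mathcal C$ of $\mathbf{Top}$ (full, isomorphism-closed, closed under products and subspaces), $\mathrm{r}_{\mathcal C}X$ is the reflection of $X$ with universal continuous surjection $\mathrm{r}_{(X,\mathcal C)}\colon X\to\mathrm{r}_{\mathcal C}X$. A space is functionally Hausdorff if distinct points are separated by a real-valued continuous function. *)

theory Defs
  imports "HOL-Analysis.Analysis"
begin

datatype sepax = SepT0 | SepT1 | SepT2 | SepFH

definition functionally_Hausdorff :: "'a topology \<Rightarrow> bool" where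
  "functionally_Hausdorff X \<longleftrightarrow>
     (\<forall>x\<in>topspace X. \<forall>y\<in>topspace X. x \<noteq> y \<longrightarrow>
        (\<exists>f. continuous_map X euclideanreal f \<and> f x \<noteq> f y))"

definition sat :: "sepax \<Rightarrow> 'a topology \<Rightarrow> bool" where
  "sat ax X = (case ax of
      SepT0 \<Rightarrow> t0_space X
    | SepT1 \<Rightarrow> t1_space X
    | SepT2 \<Rightarrow> Hausdorff_space X
    | SepFH \<Rightarrow> functionally_Hausdorff X)"

definition top_maltsev :: "'a topology \<Rightarrow> ('a \<Rightarrow> 'a \<Rightarrow> 'a \<Rightarrow> 'a) \<Rightarrow> bool" where
  "top_maltsev X \<Phi> \<longleftrightarrow>
     continuous_map (prod_topology X (prod_topology X X)) X (\<lambda>(x, y, z). \<Phi> x y z) \<and>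
     (\<forall>x\<in>topspace X. \<forall>y\<in>topspace X. \<Phi> x x y = y \<and> \<Phi> y x x = y)"

definition maltsev_hom ::
  "'a topology \<Rightarrow> ('a \<Rightarrow> 'a \<Rightarrow> 'a \<Rightarrow> 'a) \<Rightarrow> 'b topology \<Rightarrow> ('b \<Rightarrow> 'b \<Rightarrow> 'b \<Rightarrow> 'b) \<Rightarrow> ('a \<Rightarrow> 'b) \<Rightarrow> bool" where
  "maltsev_hom X \<Phi> Z \<Theta> f \<longleftrightarrow>
     continuous_map X Z f \<and>
     (\<forall>x\<in>topspace X. \<forall>y\<in>topspace X. \<forall>z\<in>topspace X. f (\<Phi> x y z) = \<Theta> (f x) (f y) (f z))"

text \<open>Factorisation of continuous maps X -> Z (Z in C) through q : X -> Y.
  Uniqueness of the factorisation is automatic since q is required to be surjective.\<close>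
definition factors_through ::
  "sepax \<Rightarrow> 'a topology \<Rightarrow> 'b topology \<Rightarrow> ('a \<Rightarrow> 'b) \<Rightarrow> 'c topology \<Rightarrow> bool" where
  "factors_through ax X Y q Z \<longleftrightarrow>
     (sat ax Z \<longrightarrow> (\<forall>f. continuous_map X Z f \<longrightarrow>
        (\<exists>g. continuous_map Y Z g \<and> (\<forall>x\<in>topspace X. g (q x) = f x))))"

end

theory Submission
  imports Defs
begin

text \<open>Each separation axiom passes to spaces mapping injectively and continuously into a
  separated space. Hence the quotient topology on Y, which is finer than that of Y, is again
  separated, the identity of Y factors through it, and the reflection q is a quotient map.
  Since every continuous map into Y factors through q, the kernel of q is a congruence for
  \<open>\<Phi>\<close>, so \<open>\<Phi>\<close> descends to an operation \<open>\<Psi>\<close> on Y. The Mal'tsev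
  identities make q open: if \<open>q v = q u\<close> with u in an open set U, then
  \<open>w \<mapsto> \<Phi> w v u\<close> maps a neighbourhood of v into U without changing q-classes.
  Products of open surjections are open, so \<open>q \<times> q \<times> q\<close> is a quotient map as well and
  \<open>\<Psi>\<close> is continuous.\<close>

lemma t0_space_injective_preimage:
  assumes Z: "t0_space Z" and f: "continuous_map W Z f" and inj: "inj_on f (topspace W)"
  shows "t0_space W"
  unfolding t0_space_def
proof (intro ballI impI)
  fix x y assume x: "x \<in> topspace W" and y: "y \<in> topspace W" and "x \<noteq> y"
  then have "f x \<noteq> f y" "f x \<in> topspace Z" "f y \<in> topspace Z"
    using f inj continuous_map_funspace[OF f] by (auto dest: inj_onD)
  with Z obtain U where U: "openin Z U" "f x \<notin> U \<longleftrightarrow> f y \<in> U"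
    unfolding t0_space_def by blast
  show "\<exists>U. openin W U \<and> (x \<notin> U \<longleftrightarrow> y \<in> U)"
    by (rule exI[of _ "{w \<in> topspace W. f w \<in> U}"])
      (use U x y openin_continuous_map_preimage[OF f U(1)] in auto)
qed

lemma t1_space_injective_preimage:
  assumes Z: "t1_space Z" and f: "continuous_map W Z f" and inj: "inj_on f (topspace W)"
  shows "t1_space W"
  unfolding t1_space_def
proof (intro ballI impI)
  fix x y assume x: "x \<in> topspace W" and y: "y \<in> topspace W" and "x \<noteq> y"
  then have "f x \<noteq> f y" "f x \<in> topspace Z" "f y \<in> topspace Z"
    using f inj continuous_map_funspace[OF f] by (auto dest: inj_onD)
  with Z obtain U where U: "openin Z U" "f x \<in> U" "f y \<notin> U"
    unfolding t1_space_def by blast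
  show "\<exists>U. openin W U \<and> x \<in> U \<and> y \<notin> U"
    by (rule exI[of _ "{w \<in> topspace W. f w \<in> U}"])
      (use U x y openin_continuous_map_preimage[OF f U(1)] in auto)
qed

lemma functionally_Hausdorff_injective_preimage:
  assumes Z: "functionally_Hausdorff Z" and f: "continuous_map W Z f" and inj: "inj_on f (topspace W)"
  shows "functionally_Hausdorff W"
  unfolding functionally_Hausdorff_def
proof (intro ballI impI)
  fix x y assume x: "x \<in> topspace W" and y: "y \<in> topspace W" and "x \<noteq> y"
  then have "f x \<noteq> f y" "f x \<in> topspace Z" "f y \<in> topspace Z"
    using f inj continuous_map_funspace[OF f] by (auto dest: inj_onD)
  with Z obtain g where g: "continuous_map Z euclideanreal g" "g (f x) \<noteq> g (f y)"
    unfolding functionally_Hausdorff_def by blast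
  show "\<exists>g. continuous_map W euclideanreal g \<and> g x \<noteq> g y"
    by (rule exI[of _ "g \<circ> f"]) (use g continuous_map_compose[OF f g(1)] in auto)
qed

lemma sat_injective_preimage:
  assumes "sat ax Z" and "continuous_map W Z f" and "inj_on f (topspace W)"
  shows "sat ax W"
  using assms
  by (cases ax) (auto simp: sat_def t0_space_injective_preimage t1_space_injective_preimage
      Hausdorff_space_injective_preimage functionally_Hausdorff_injective_preimage)

lemma factors_through_any_type:
  fixes X :: "'a topology" and Y :: "'b topology" and Z :: "'c topology"
  assumes fac: "\<forall>Z :: 'a topology. factors_through ax X Y q Z"
    and "sat ax Z" and f: "continuous_map X Z f"
  shows "\<exists>g. continuous_map Y Z g \<and> (\<forall>x\<in>topspace X. g (q x) = f x)"
proof -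
  \<comment> \<open>Transport the subspace \<open>f ` topspace X\<close> of Z to a set of representatives in 'a.\<close>
  define h where "h = inv_into (topspace X) f"
  define Z' where "Z' = pullback_topology (h ` f ` topspace X) f Z"
  have fh: "f (h (f x)) = f x" if "x \<in> topspace X" for x
    using that by (simp add: h_def f_inv_into_f)
  have f': "continuous_map Z' Z f"
    using continuous_map_pullback[OF continuous_map_id[of Z]] by (simp add: Z'_def)
  have "inj_on f (topspace Z')"
  proof (rule inj_onI)
    fix r r' assume "r \<in> topspace Z'" "r' \<in> topspace Z'" and "f r = f r'"
    then obtain x x' where "x \<in> topspace X" "x' \<in> topspace X" "r = h (f x)" "r' = h (f x')"
      by (auto simp: Z'_def topspace_pullback_topology)
    with \<open>f r = f r'\<close> show "r = r'"
      by (simp add: fh)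
  qed
  then have "sat ax Z'"
    using sat_injective_preimage[OF \<open>sat ax Z\<close> f'] by blast
  moreover have "continuous_map X Z' (h \<circ> f)"
    unfolding Z'_def
  proof (rule continuous_map_pullback')
    show "continuous_map X Z (f \<circ> (h \<circ> f))"
      using f by (rule continuous_map_eq) (simp add: fh)
  qed auto
  ultimately obtain g where g: "continuous_map Y Z' g" "\<forall>x\<in>topspace X. g (q x) = (h \<circ> f) x"
    using fac unfolding factors_through_def by blast
  show ?thesis
    by (rule exI[of _ "f \<circ> g"]) (use g continuous_map_compose[OF g(1) f'] fh in auto)
qed

definition quotient_topology :: "'a topology \<Rightarrow> ('a \<Rightarrow> 'b) \<Rightarrow> 'b topology" where
  "quotient_topology X q =
     topology (\<lambda>U. U \<subseteq> q ` topspace X \<and> openin X {x \<in> topspace X. q x \<in> U})"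

lemma openin_quotient_topology:
  "openin (quotient_topology X q) U \<longleftrightarrow> U \<subseteq> q ` topspace X \<and> openin X {x \<in> topspace X. q x \<in> U}"
proof -
  have "istopology (\<lambda>U. U \<subseteq> q ` topspace X \<and> openin X {x \<in> topspace X. q x \<in> U})"
    unfolding istopology_def
  proof (rule conjI; intro allI impI)
    fix U V
    assume "U \<subseteq> q ` topspace X \<and> openin X {x \<in> topspace X. q x \<in> U}"
      and "V \<subseteq> q ` topspace X \<and> openin X {x \<in> topspace X. q x \<in> V}"
    moreover have "{x \<in> topspace X. q x \<in> U \<inter> V} =
        {x \<in> topspace X. q x \<in> U} \<inter> {x \<in> topspace X. q x \<in> V}"
      by auto
    ultimately show "U \<inter> V \<subseteq> q ` topspace X \<and> openin X {x \<in> topspace X. q x \<in> U \<inter> V}"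
      by auto
  next
    fix K
    assume K: "\<forall>U\<in>K. U \<subseteq> q ` topspace X \<and> openin X {x \<in> topspace X. q x \<in> U}"
    have "{x \<in> topspace X. q x \<in> \<Union>K} = (\<Union>U\<in>K. {x \<in> topspace X. q x \<in> U})"
      by auto
    then show "\<Union>K \<subseteq> q ` topspace X \<and> openin X {x \<in> topspace X. q x \<in> \<Union>K}"
      using K by auto
  qed
  then show ?thesis
    by (simp add: quotient_topology_def)
qed

lemma topspace_quotient_topology: "topspace (quotient_topology X q) = q ` topspace X"
proof -
  have "{x \<in> topspace X. q x \<in> q ` topspace X} = topspace X"
    by auto
  then have "openin (quotient_topology X q) (q ` topspace X)"
    by (simp add: openin_quotient_topology)
  then have "q ` topspace X \<subseteq> topspace (quotient_topology X q)"
    by (rule openin_subset)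
  moreover have "topspace (quotient_topology X q) \<subseteq> q ` topspace X"
    using openin_quotient_topology[of X q "topspace (quotient_topology X q)"] by simp
  ultimately show ?thesis
    by blast
qed

lemma quotient_map_quotient_topology: "quotient_map X (quotient_topology X q) q"
  by (simp add: quotient_map_def topspace_quotient_topology openin_quotient_topology)

lemma quotient_map_iff_continuous_id:
  assumes q: "continuous_map X Y q" and sur: "q ` topspace X = topspace Y"
  shows "quotient_map X Y q \<longleftrightarrow> continuous_map Y (quotient_topology X q) id"
proof -
  have "{y \<in> topspace Y. id y \<in> U} = U" if "U \<subseteq> topspace Y" for U
    using that by auto
  then have "continuous_map Y (quotient_topology X q) id \<longleftrightarrow>
      (\<forall>U. U \<subseteq> topspace Y \<and> openin X {x \<in> topspace X. q x \<in> U} \<longrightarrow> openin Y U)"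
    by (auto simp: continuous_map_def topspace_quotient_topology openin_quotient_topology sur)
  then show ?thesis
    using q sur openin_continuous_map_preimage[OF q] unfolding quotient_map_def by blast
qed

lemma reflection_imp_quotient_map:
  fixes X :: "'a topology" and Y :: "'b topology"
  assumes "sat ax Y" and q: "continuous_map X Y q" and sur: "q ` topspace X = topspace Y"
    and fac: "\<forall>Z :: 'b topology. factors_through ax X Y q Z"
  shows "quotient_map X Y q"
proof -
  let ?Q = "quotient_topology X q"
  have "continuous_map X Y (id \<circ> q)"
    using q by simp
  then have "continuous_map ?Q Y id"
    by (rule continuous_compose_quotient_map[OF quotient_map_quotient_topology])
  then have "sat ax ?Q"
    using sat_injective_preimage[OF \<open>sat ax Y\<close>] by (metis inj_on_id)
  moreover have "continuous_map X ?Q q"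
    by (rule quotient_imp_continuous_map[OF quotient_map_quotient_topology])
  ultimately obtain g where g: "continuous_map Y ?Q g" "\<forall>x\<in>topspace X. g (q x) = q x"
    using fac unfolding factors_through_def by blast
  have "continuous_map Y ?Q id"
    using g(1) by (rule continuous_map_eq) (use g(2) sur in force)
  then show ?thesis
    using quotient_map_iff_continuous_id[OF q sur] by blast
qed

lemma top_maltsev_continuous_map:
  assumes "top_maltsev X \<Phi>"
    and "continuous_map W X a" and "continuous_map W X b" and "continuous_map W X c"
  shows "continuous_map W X (\<lambda>t. \<Phi> (a t) (b t) (c t))"
proof -
  have "continuous_map W (prod_topology X (prod_topology X X)) (\<lambda>t. (a t, b t, c t))"
    using assms(2-4) by (intro continuous_map_pairedI)
  moreover have "continuous_map (prod_topology X (prod_topology X X)) X (\<lambda>(x, y, z). \<Phi> x y z)"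
    using assms(1) by (simp add: top_maltsev_def)
  ultimately have "continuous_map W X ((\<lambda>(x, y, z). \<Phi> x y z) \<circ> (\<lambda>t. (a t, b t, c t)))"
    by (rule continuous_map_compose)
  then show ?thesis
    by (simp add: o_def)
qed

lemma top_maltsev_in_topspace:
  assumes "top_maltsev X \<Phi>" and "x \<in> topspace X" "y \<in> topspace X" "z \<in> topspace X"
  shows "\<Phi> x y z \<in> topspace X"
proof -
  have "continuous_map (prod_topology X (prod_topology X X)) X (\<lambda>(x, y, z). \<Phi> x y z)"
    using assms(1) by (simp add: top_maltsev_def)
  from funcset_mem[OF continuous_map_funspace[OF this], of "(x, y, z)"] show ?thesis
    using assms(2-4) by simp
qed

definition kernel_congruence :: "'a topology \<Rightarrow> ('a \<Rightarrow> 'b) \<Rightarrow> ('a \<Rightarrow> 'a \<Rightarrow> 'a \<Rightarrow> 'a) \<Rightarrow> bool" where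
  "kernel_congruence X q \<Phi> \<longleftrightarrow>
     (\<forall>x\<in>topspace X. \<forall>y\<in>topspace X. \<forall>z\<in>topspace X.
      \<forall>x'\<in>topspace X. \<forall>y'\<in>topspace X. \<forall>z'\<in>topspace X.
        q x = q x' \<and> q y = q y' \<and> q z = q z' \<longrightarrow> q (\<Phi> x y z) = q (\<Phi> x' y' z'))"

lemma kernel_congruenceI_fibres:
  assumes \<Phi>: "top_maltsev X \<Phi>" and q: "continuous_map X Y q"
    and fibres: "\<And>f x x'. \<lbrakk>continuous_map X Y f; x \<in> topspace X; x' \<in> topspace X; q x = q x'\<rbrakk>
                   \<Longrightarrow> f x = f x'"
  shows "kernel_congruence X q \<Phi>"
  unfolding kernel_congruence_def
proof (intro ballI impI, elim conjE)
  fix x y z x' y' z'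
  assume S: "x \<in> topspace X" "y \<in> topspace X" "z \<in> topspace X"
    "x' \<in> topspace X" "y' \<in> topspace X" "z' \<in> topspace X"
    and eq: "q x = q x'" "q y = q y'" "q z = q z'"
  have cont: "continuous_map X Y (\<lambda>t. q (\<Phi> (a t) (b t) (c t)))"
    if "continuous_map X X a" "continuous_map X X b" "continuous_map X X c" for a b c
    using continuous_map_compose[OF top_maltsev_continuous_map[OF \<Phi> that] q] by (simp add: o_def)
  note ident = continuous_map_id[unfolded id_def]
  have "q (\<Phi> x y z) = q (\<Phi> x' y z)"
    by (rule fibres[OF cont[OF ident, of "\<lambda>_. y" "\<lambda>_. z"]]) (use S eq in auto)
  also have "\<dots> = q (\<Phi> x' y' z)"
    by (rule fibres[OF cont[of "\<lambda>_. x'" "\<lambda>t. t" "\<lambda>_. z"]]) (use S eq ident in auto)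
  also have "\<dots> = q (\<Phi> x' y' z')"
    by (rule fibres[OF cont[of "\<lambda>_. x'" "\<lambda>_. y'" "\<lambda>t. t"]]) (use S eq ident in auto)
  finally show "q (\<Phi> x y z) = q (\<Phi> x' y' z')" .
qed

lemma kernel_congruenceD:
  assumes "kernel_congruence X q \<Phi>"
    and "x \<in> topspace X" "y \<in> topspace X" "z \<in> topspace X"
    and "x' \<in> topspace X" "y' \<in> topspace X" "z' \<in> topspace X"
    and "q x = q x'" "q y = q y'" "q z = q z'"
  shows "q (\<Phi> x y z) = q (\<Phi> x' y' z')"
  using assms unfolding kernel_congruence_def by blast

lemma open_map_if_kernel_congruence:
  assumes \<Phi>: "top_maltsev X \<Phi>" and q: "quotient_map X Y q" and cong: "kernel_congruence X q \<Phi>"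
  shows "open_map X Y q"
  unfolding open_map_def
proof (intro allI impI)
  fix U assume U: "openin X U"
  have "openin X {w \<in> topspace X. q w \<in> q ` U}"
    unfolding openin_subopen[of X "{w \<in> topspace X. q w \<in> q ` U}"]
  proof
    fix v assume "v \<in> {w \<in> topspace X. q w \<in> q ` U}"
    then obtain u where v: "v \<in> topspace X" and u: "u \<in> U" "q v = q u" by auto
    have uX: "u \<in> topspace X" using u U openin_subset by blast
    define V where "V = {w \<in> topspace X. \<Phi> w v u \<in> U}"
    have "continuous_map X X (\<lambda>w. \<Phi> w v u)"
      using v uX by (intro top_maltsev_continuous_map[OF \<Phi>]) auto
    then have "openin X V"
      unfolding V_def using U by (rule openin_continuous_map_preimage)
    moreover have "v \<in> V"
      using \<Phi> v uX u(1) by (simp add: V_def top_maltsev_def)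
    moreover have "w \<in> topspace X \<and> q w \<in> q ` U" if "w \<in> V" for w
    proof -
      have w: "w \<in> topspace X" "\<Phi> w v u \<in> U" using that by (auto simp: V_def)
      have "q (\<Phi> w v u) = q (\<Phi> w v v)"
        by (rule kernel_congruenceD[OF cong]) (use w(1) v uX u(2) in auto)
      also have "\<dots> = q w"
        using \<Phi> w(1) v by (simp add: top_maltsev_def)
      finally show ?thesis using w by (metis image_eqI)
    qed
    ultimately show "\<exists>T. openin X T \<and> v \<in> T \<and> T \<subseteq> {w \<in> topspace X. q w \<in> q ` U}"
      by blast
  qed
  moreover have "q ` U \<subseteq> topspace Y"
    using q openin_subset[OF U] by (auto simp: quotient_map_def)
  ultimately show "openin Y (q ` U)"
    using q unfolding quotient_map_def by blast
qed

lemma open_map_map_prod: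
  assumes f: "open_map X X' f" and g: "open_map Y Y' g"
  shows "open_map (prod_topology X Y) (prod_topology X' Y') (map_prod f g)"
  unfolding open_map_def
proof (intro allI impI)
  fix S assume S: "openin (prod_topology X Y) S"
  show "openin (prod_topology X' Y') (map_prod f g ` S)"
    unfolding openin_prod_topology_alt
  proof (intro allI impI)
    fix a b assume "(a, b) \<in> map_prod f g ` S"
    then obtain x y where xy: "(x, y) \<in> S" "a = f x" "b = g y" by auto
    then obtain U V where UV: "openin X U" "openin Y V" "x \<in> U" "y \<in> V" "U \<times> V \<subseteq> S"
      using S unfolding openin_prod_topology_alt by meson
    show "\<exists>U V. openin X' U \<and> openin Y' V \<and> a \<in> U \<and> b \<in> V \<and> U \<times> V \<subseteq> map_prod f g ` S"
    proof (intro exI conjI)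
      show "openin X' (f ` U)" "openin Y' (g ` V)"
        using f g UV unfolding open_map_def by blast+
      show "a \<in> f ` U" "b \<in> g ` V" using xy UV by auto
      show "f ` U \<times> g ` V \<subseteq> map_prod f g ` S"
        using UV map_prod_surj_on[of f U _ g V] by blast
    qed
  qed
qed

lemma top_maltsev_quotient:
  assumes \<Phi>: "top_maltsev X \<Phi>" and q: "quotient_map X Y q" and cong: "kernel_congruence X q \<Phi>"
  shows "\<exists>\<Psi>. top_maltsev Y \<Psi> \<and>
           (\<forall>x\<in>topspace X. \<forall>y\<in>topspace X. \<forall>z\<in>topspace X. \<Psi> (q x) (q y) (q z) = q (\<Phi> x y z))"
proof -
  have sur: "q ` topspace X = topspace Y"
    using q by (simp add: quotient_map_def)
  define s where "s = inv_into (topspace X) q"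
  have s: "s a \<in> topspace X" "q (s a) = a" if "a \<in> topspace Y" for a
    using that sur by (auto simp: s_def inv_into_into f_inv_into_f)
  define \<Psi> where "\<Psi> a b c = q (\<Phi> (s a) (s b) (s c))" for a b c
  have \<Psi>q: "\<Psi> (q x) (q y) (q z) = q (\<Phi> x y z)"
    if "x \<in> topspace X" "y \<in> topspace X" "z \<in> topspace X" for x y z
    unfolding \<Psi>_def using that sur s by (intro kernel_congruenceD[OF cong]) auto
  let ?q3 = "map_prod q (map_prod q q)"
  have "quotient_map (prod_topology X (prod_topology X X)) (prod_topology Y (prod_topology Y Y)) ?q3"
  proof (rule continuous_open_imp_quotient_map)
    have "continuous_map X Y q" using q quotient_imp_continuous_map by blast
    then show "continuous_map (prod_topology X (prod_topology X X))
        (prod_topology Y (prod_topology Y Y)) ?q3"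
      by (simp add: map_prod_def continuous_map_prod_top)
    have "open_map X Y q" by (rule open_map_if_kernel_congruence[OF \<Phi> q cong])
    then show "open_map (prod_topology X (prod_topology X X))
        (prod_topology Y (prod_topology Y Y)) ?q3"
      by (intro open_map_map_prod)
    show "?q3 ` topspace (prod_topology X (prod_topology X X)) = topspace (prod_topology Y (prod_topology Y Y))"
      using sur by (simp add: map_prod_surj_on)
  qed
  moreover have "continuous_map (prod_topology X (prod_topology X X)) Y
      ((\<lambda>(a, b, c). \<Psi> a b c) \<circ> ?q3)"
  proof (rule continuous_map_eq)
    have "continuous_map (prod_topology X (prod_topology X X)) X (\<lambda>(x, y, z). \<Phi> x y z)"
      using \<Phi> by (simp add: top_maltsev_def)
    then show "continuous_map (prod_topology X (prod_topology X X)) Y (q \<circ> (\<lambda>(x, y, z). \<Phi> x y z))"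
      by (rule continuous_map_compose[OF _ quotient_imp_continuous_map[OF q]])
  qed (auto simp: \<Psi>q)
  ultimately have "continuous_map (prod_topology Y (prod_topology Y Y)) Y (\<lambda>(a, b, c). \<Psi> a b c)"
    by (rule continuous_compose_quotient_map)
  moreover have "\<Psi> a a b = b \<and> \<Psi> b a a = b" if "a \<in> topspace Y" "b \<in> topspace Y" for a b
    using \<Phi> that s by (simp add: \<Psi>_def top_maltsev_def)
  ultimately show ?thesis
    using \<Psi>q by (auto simp: top_maltsev_def)
qed

lemma maltsev_hom_factor:
  assumes \<Phi>: "top_maltsev X \<Phi>" and sur: "q ` topspace X = topspace Y"
    and \<Psi>q: "\<forall>x\<in>topspace X. \<forall>y\<in>topspace X. \<forall>z\<in>topspace X. \<Psi> (q x) (q y) (q z) = q (\<Phi> x y z)"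
    and f: "maltsev_hom X \<Phi> Z \<Theta> f"
    and g: "continuous_map Y Z g" and gq: "\<forall>x\<in>topspace X. g (q x) = f x"
  shows "maltsev_hom Y \<Psi> Z \<Theta> g"
  unfolding maltsev_hom_def
proof (intro conjI g ballI)
  fix a b c assume "a \<in> topspace Y" "b \<in> topspace Y" "c \<in> topspace Y"
  then obtain x y z where xyz: "x \<in> topspace X" "y \<in> topspace X" "z \<in> topspace X"
    and abc: "a = q x" "b = q y" "c = q z"
    using sur by (metis imageE)
  have "g (\<Psi> a b c) = f (\<Phi> x y z)"
    using \<Psi>q gq xyz abc top_maltsev_in_topspace[OF \<Phi> xyz] by simp
  also have "\<dots> = \<Theta> (g a) (g b) (g c)"
    using f gq xyz abc by (simp add: maltsev_hom_def)
  finally show "g (\<Psi> a b c) = \<Theta> (g a) (g b) (g c)" .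
qed

theorem theorem4p11:
  fixes ax :: sepax
    and X :: "'a topology" and \<Phi> :: "'a \<Rightarrow> 'a \<Rightarrow> 'a \<Rightarrow> 'a"
    and Y :: "'b topology" and q :: "'a \<Rightarrow> 'b"
  assumes "top_maltsev X \<Phi>"
    and "sat ax Y"
    and "continuous_map X Y q"
    and "q ` topspace X = topspace Y"
    and "\<forall>Z :: 'a topology. factors_through ax X Y q Z"
    and "\<forall>Z :: 'b topology. factors_through ax X Y q Z"
    and "\<forall>Z :: ('b \<times> 'b \<times> 'b) topology. factors_through ax X Y q Z"
  shows "\<exists>\<Psi>. top_maltsev Y \<Psi> \<and>
           (\<forall>x\<in>topspace X. \<forall>y\<in>topspace X. \<forall>z\<in>topspace X.
              \<Psi> (q x) (q y) (q z) = q (\<Phi> x y z)) \<and>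
           (\<forall>(Z :: 'c topology) \<Theta> f.
              sat ax Z \<and> top_maltsev Z \<Theta> \<and> maltsev_hom X \<Phi> Z \<Theta> f \<longrightarrow>
              (\<exists>g. maltsev_hom Y \<Psi> Z \<Theta> g \<and> (\<forall>x\<in>topspace X. g (q x) = f x)))"
proof -
  have quot: "quotient_map X Y q"
    using assms(2-4,6) by (rule reflection_imp_quotient_map)
  have "kernel_congruence X q \<Phi>"
  proof (rule kernel_congruenceI_fibres[OF assms(1,3)])
    fix f x x' assume "continuous_map X Y f" "x \<in> topspace X" "x' \<in> topspace X" "q x = q x'"
    then show "f x = f x'"
      using assms(2,6) unfolding factors_through_def by metis
  qed
  then obtain \<Psi> where \<Psi>: "top_maltsev Y \<Psi>"
    and \<Psi>q: "\<forall>x\<in>topspace X. \<forall>y\<in>topspace X. \<forall>z\<in>topspace X. \<Psi> (q x) (q y) (q z) = q (\<Phi> x y z)"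
    using top_maltsev_quotient[OF assms(1) quot] by blast
  have "\<exists>g. maltsev_hom Y \<Psi> Z \<Theta> g \<and> (\<forall>x\<in>topspace X. g (q x) = f x)"
    if "sat ax Z" and f: "maltsev_hom X \<Phi> Z \<Theta> f" for Z :: "'c topology" and \<Theta> f
  proof -
    have "continuous_map X Z f"
      using f by (simp add: maltsev_hom_def)
    then obtain g where "continuous_map Y Z g" "\<forall>x\<in>topspace X. g (q x) = f x"
      using factors_through_any_type[OF assms(5) \<open>sat ax Z\<close>] by blast
    then show ?thesis
      using maltsev_hom_factor[OF assms(1,4) \<Psi>q f] by blast
  qed
  then show ?thesis
    using \<Psi> \<Psi>q by blast
qed

end
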